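(* Suppose Assumption 1 holds with parameters $\varepsilon,\alpha\in[1,\infty],k_1$ and a supergradient $g'(x^* )$ that moreover satisfies $g'(x^* )>0$. Then in the asymptotic regime there exist constants $K>0$ and $c_0$ (independent of $c$) such that for every $c\ge c_0$ there is a two-price policy with performance loss at most $K\,c^{1/(\alpha+1)}(\log c)^2$ if $\alpha\in[1,\infty)$, i.e. $\tilde O(c^{1/(\alpha+1)})$, and at most $K(\log c)^2$ if $\alpha=\infty$.
   Context: Setting. Fix $c\in\mathbb N$ (number of identical units of a single reusable resource), an arrival rate $\lambda>0$ and a mean usage duration $d>0$, with $x^*:=c/(\lambda d)\in(0,1)$. Let $g:[0,1]\to\mathbb R$ be concave, non-decreasing, with $g(0)=0$ (the reward function). A stock-dependent policy is a vector $\mathbf x=(x_1,\dots,x_c)\in[0,1]^c$, where $x_j$ is the admission probability used when exactly $j$ units are available (the admission probability is $0$ when no unit is available). Its steady-state distribution is the unique probability vector $\pi=(\pi_0,\dots,\pi_c)$ satisfying $\pi_j\lambda x_j=\pi_{j-1}(c-j+1)/d$ for all $j\in\{1,\dots,c\}$, and its long-run average reward is $\mathcal R(\mathbf x)=\sum_{j=1}^c\pi_j\lambda g(x_j)$. The performance loss of $\mathbf x$ is $\lambda g(x^* )-\mathcal R(\mathbf x)$. A two-price policy with parameters $x_L,x_H\in[0,1]$ and $\tau\in\{1,\dots,c\}$ sets $x_j=x_L$ for $1\le j\le\tau$ and $x_j=x_H$ for $\tau<j\le c$. Asymptotic regime: $x^*\in(0,1)$, $d$ and $g$ are fixed, $c\to\infty$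 and $\lambda=c/(x^*d)$. Assumption 1: there exist $0<\varepsilon<\min\{x^*,1-x^*\}$, $\alpha\in[1,\infty]$, $k_1\ge0$ and a supergradient $g'(x^* )\ge0$ of $g$ at $x^*$ such that $g(x)\ge g(x^* )+g'(x^* )(x-x^* )-k_1|x-x^*|^\alpha$ for all $x\in[x^*-\varepsilon,x^*+\varepsilon]$ (when $\alpha=\infty$, the term $|x-x^*|^\alpha$ is interpreted as $0$). *)

theory Defs
  imports "HOL-Analysis.Analysis"
begin

text \<open>A stock-dependent policy is a function x :: nat => real; only x 1, ..., x c matter
  (x j is the admission probability when exactly j units are available).\<close>

definition is_steady_state ::
  "nat \<Rightarrow> real \<Rightarrow> real \<Rightarrow> (nat \<Rightarrow> real) \<Rightarrow> (nat \<Rightarrow> real) \<Rightarrow> bool" where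
  "is_steady_state c lam d x p \<longleftrightarrow>
     (\<forall>j\<in>{0..c}. 0 \<le> p j) \<and> (\<forall>j>c. p j = 0) \<and> (\<Sum>j=0..c. p j) = 1 \<and>
     (\<forall>j\<in>{1..c}. p j * lam * x j = p (j - 1) * (real c - real j + 1) / d)"

definition steady_state ::
  "nat \<Rightarrow> real \<Rightarrow> real \<Rightarrow> (nat \<Rightarrow> real) \<Rightarrow> nat \<Rightarrow> real" where
  "steady_state c lam d x = (THE p. is_steady_state c lam d x p)"

definition avg_reward ::
  "(real \<Rightarrow> real) \<Rightarrow> nat \<Rightarrow> real \<Rightarrow> real \<Rightarrow> (nat \<Rightarrow> real) \<Rightarrow> real" where
  "avg_reward g c lam d x = (\<Sum>j=1..c. steady_state c lam d x j * lam * g (x j))"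

definition perf_loss ::
  "(real \<Rightarrow> real) \<Rightarrow> nat \<Rightarrow> real \<Rightarrow> real \<Rightarrow> real \<Rightarrow> (nat \<Rightarrow> real) \<Rightarrow> real" where
  "perf_loss g c lam d xstar x = lam * g xstar - avg_reward g c lam d x"

definition two_price_policy :: "real \<Rightarrow> real \<Rightarrow> nat \<Rightarrow> nat \<Rightarrow> real" where
  "two_price_policy xL xH tau = (\<lambda>j. if j \<le> tau then xL else xH)"

end

theory Submission
  imports Defs "HOL-Real_Asymp.Real_Asymp"
begin

text \<open>
  Use the prices \<open>xstar * (1 - u)\<close> when at most \<open>tau \<approx> 4 ln c / u\<close> units are available and
  \<open>xstar * (1 + u)\<close> otherwise. The number of available units is a birth-death chain whose drift
  points towards \<open>tau\<close> from both sides, so its stationary law is a two-sided geometric law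
  around \<open>tau\<close>: a stock-out has probability at most \<open>1 / c\<close> and the mean number of available
  units is \<open>O(ln c / u)\<close>. Linearising \<open>g\<close> at \<open>xstar\<close> by Assumption 1 and using flow balance
  (admission rate = release rate), the loss is at most
  \<open>g xstar / (xstar d) + c k1 (xstar u)^alpha / (xstar d) + O(g' ln c / (u d))\<close>.
  For finite \<open>alpha\<close> the choice \<open>u = (ln c)^(2/alpha) / c^(1/(alpha+1))\<close> makes both \<open>u\<close>-dependent
  terms \<open>O(c^(1/(alpha+1)) (ln c)^2)\<close>; for \<open>alpha = \<infinity>\<close> a constant \<open>u\<close> gives \<open>O(ln c)\<close>.
\<close>

fun balance_weight :: "nat \<Rightarrow> real \<Rightarrow> real \<Rightarrow> (nat \<Rightarrow> real) \<Rightarrow> nat \<Rightarrow> real" where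
  "balance_weight c lam d x 0 = 1"
| "balance_weight c lam d x (Suc j) =
     balance_weight c lam d x j * (real c - real j) / (d * lam * x (Suc j))"

context
  fixes c :: nat and lam d :: real and x :: "nat \<Rightarrow> real"
  assumes lam: "0 < lam" and d: "0 < d" and x_pos: "\<forall>j\<in>{1..c}. 0 < x j"
begin

lemma balance_weight_pos: "j \<le> c \<Longrightarrow> 0 < balance_weight c lam d x j"
  by (induction j) (use lam d x_pos in auto)

lemma is_steady_state_balance_weight:
  "is_steady_state c lam d x
     (\<lambda>j. if j \<le> c then balance_weight c lam d x j / (\<Sum>i=0..c. balance_weight c lam d x i) else 0)"
proof -
  let ?w = "balance_weight c lam d x"
  define S where "S = (\<Sum>i=0..c. ?w i)"
  have S_pos: "0 < S"
    unfolding S_def using balance_weight_pos by (intro sum_pos) auto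
  show ?thesis
    unfolding is_steady_state_def S_def[symmetric]
  proof (intro conjI ballI allI impI)
    fix j assume "j \<in> {0..c}"
    then show "0 \<le> (if j \<le> c then ?w j / S else 0)" using balance_weight_pos[of j] S_pos by simp
  next
    have "(\<Sum>j=0..c. if j \<le> c then ?w j / S else 0) = (\<Sum>j=0..c. ?w j) / S"
      by (simp add: sum_divide_distrib)
    then show "(\<Sum>j=0..c. if j \<le> c then ?w j / S else 0) = 1" using S_pos by (simp add: S_def)
  next
    fix j assume j: "j \<in> {1..c}"
    then obtain i where "j = Suc i" by (cases j) auto
    moreover have "0 < x j" using j x_pos by blast
    ultimately show "(if j \<le> c then ?w j / S else 0) * lam * x j
        = (if j - 1 \<le> c then ?w (j - 1) / S else 0) * (real c - real j + 1) / d"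
      using j lam d S_pos by (simp add: field_simps)
  qed simp
qed

lemma is_steady_state_imp_eq:
  assumes "is_steady_state c lam d x p"
  shows "p = (\<lambda>j. if j \<le> c then balance_weight c lam d x j / (\<Sum>i=0..c. balance_weight c lam d x i) else 0)"
proof -
  let ?w = "balance_weight c lam d x"
  have zero: "\<forall>j>c. p j = 0" and sum_one: "(\<Sum>j=0..c. p j) = 1"
    and balance: "\<forall>j\<in>{1..c}. p j * lam * x j = p (j - 1) * (real c - real j + 1) / d"
    using assms unfolding is_steady_state_def by auto
  have p_eq: "p j = p 0 * ?w j" if "j \<le> c" for j
    using that
  proof (induction j)
    case (Suc i)
    have "p (Suc i) * lam * x (Suc i) = p i * (real c - real i) / d"
      using balance Suc.prems by force
    moreover have "0 < x (Suc i)" using x_pos Suc.prems by simp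
    ultimately have "p (Suc i) = p i * (real c - real i) / (d * lam * x (Suc i))"
      using lam d by (simp add: field_simps)
    then show ?case using Suc by simp
  qed simp
  have "0 < (\<Sum>i=0..c. ?w i)" using balance_weight_pos by (intro sum_pos) auto
  moreover have "1 = (\<Sum>j=0..c. p 0 * ?w j)"
    using sum_one p_eq by (metis atLeastAtMost_iff sum.cong)
  ultimately have p_0: "p 0 = 1 / (\<Sum>i=0..c. ?w i)"
    by (simp add: eq_divide_eq flip: sum_distrib_left)
  show ?thesis
  proof
    fix j show "p j = (if j \<le> c then ?w j / (\<Sum>i=0..c. ?w i) else 0)"
      using p_eq[of j] zero p_0 by (cases "j \<le> c") auto
  qed
qed

lemma steady_state_eq:
  "steady_state c lam d x =
     (\<lambda>j. if j \<le> c then balance_weight c lam d x j / (\<Sum>i=0..c. balance_weight c lam d x i) else 0)"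
  unfolding steady_state_def
  using is_steady_state_balance_weight is_steady_state_imp_eq by (rule the_equality)

lemma is_steady_state_steady_state: "is_steady_state c lam d x (steady_state c lam d x)"
  unfolding steady_state_eq by (rule is_steady_state_balance_weight)

end

text \<open>Flow balance: the admission rate equals the rate at which busy units are released.\<close>

lemma steady_state_throughput:
  assumes ss: "is_steady_state c lam d x p" and d: "0 < d"
  shows "(\<Sum>j=1..c. p j * lam * x j) = (real c - (\<Sum>i=0..c. real i * p i)) / d"
proof -
  have balance: "\<forall>j\<in>{1..c}. p j * lam * x j = p (j - 1) * (real c - real j + 1) / d"
    and sum_one: "(\<Sum>i=0..c. p i) = 1"
    using ss by (auto simp: is_steady_state_def)
  have "(\<Sum>j=1..c. p j * lam * x j) = (\<Sum>j=1..c. p (j - 1) * (real c - real j + 1) / d)"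
    using balance by (intro sum.cong) auto
  also have "\<dots> = (\<Sum>j\<in>Suc ` {0..<c}. p (j - 1) * (real c - real j + 1) / d)"
    by (simp add: atLeastLessThanSuc_atLeastAtMost)
  also have "\<dots> = (\<Sum>i=0..<c. p i * (real c - real i) / d)"
    by (subst sum.reindex) (auto simp: algebra_simps)
  also have "\<dots> = (\<Sum>i=0..c. p i * (real c - real i) / d)"
    by (simp add: sum.atLeast0_atMost_Suc atLeast0AtMost lessThan_Suc_atMost[symmetric] atLeast0LessThan)
  also have "\<dots> = (real c * (\<Sum>i=0..c. p i) - (\<Sum>i=0..c. real i * p i)) / d"
    by (simp add: sum_subtractf sum_divide_distrib[symmetric] sum_distrib_left algebra_simps)
  finally show ?thesis using sum_one by simp
qed

lemma reward_gap_le: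
  assumes ss: "is_steady_state c lam d x p" and d: "0 < d" and xs: "0 < xs"
    and lam: "lam = real c / (xs * d)"
    and lower: "\<forall>j\<in>{1..c}. g xs + g' * (x j - xs) - h \<le> g (x j)"
    and g_xs: "0 \<le> g xs" and h: "0 \<le> h" and g': "0 \<le> g'"
    and p_0: "p 0 \<le> 1 / real c" and mean: "(\<Sum>i=0..c. real i * p i) \<le> m"
  shows "lam * g xs - (\<Sum>j=1..c. p j * lam * g (x j))
           \<le> g xs / (xs * d) + real c * h / (xs * d) + g' * m / d"
proof -
  define E where "E = (\<Sum>i=0..c. real i * p i)"
  have p_nonneg: "\<forall>j\<in>{0..c}. 0 \<le> p j" and "(\<Sum>i=0..c. p i) = 1"
    using ss by (auto simp: is_steady_state_def)
  then have sum_pos_states: "(\<Sum>j=1..c. p j) = 1 - p 0"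
    by (simp add: sum.atLeast_Suc_atMost)
  have lam_nonneg: "0 \<le> lam" using lam xs d by simp
  have "(\<Sum>j=1..c. p j * lam * (g xs - g' * xs - h) + g' * (p j * lam * x j))
          \<le> (\<Sum>j=1..c. p j * lam * g (x j))"
  proof (rule sum_mono)
    fix j assume j: "j \<in> {1..c}"
    have "p j * lam * (g xs + g' * (x j - xs) - h) \<le> p j * lam * g (x j)"
      using lower p_nonneg lam_nonneg j by (intro mult_left_mono) auto
    then show "p j * lam * (g xs - g' * xs - h) + g' * (p j * lam * x j) \<le> p j * lam * g (x j)"
      by (simp add: algebra_simps)
  qed
  also have "(\<Sum>j=1..c. p j * lam * (g xs - g' * xs - h) + g' * (p j * lam * x j))
      = (\<Sum>j=1..c. p j) * lam * (g xs - g' * xs - h) + g' * (\<Sum>j=1..c. p j * lam * x j)"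
    by (simp add: sum.distrib sum_distrib_left sum_distrib_right)
  also have "\<dots> = (1 - p 0) * lam * (g xs - g' * xs - h) + g' * ((real c - E) / d)"
    unfolding sum_pos_states steady_state_throughput[OF ss d] E_def ..
  finally have reward_ge: "(1 - p 0) * lam * (g xs - g' * xs - h) + g' * ((real c - E) / d)
      \<le> (\<Sum>j=1..c. p j * lam * g (x j))" .
  have "(1 - p 0) * lam * (g xs - g' * xs - h) + g' * ((real c - E) / d)
      = lam * g xs - p 0 * (lam * g xs) - lam * h + p 0 * (lam * h) + p 0 * (g' * (real c / d)) - g' * E / d"
    unfolding lam using xs d by (simp add: field_simps)
  moreover have "0 \<le> p 0 * (lam * h)" "0 \<le> p 0 * (g' * (real c / d))"
    using p_nonneg lam_nonneg h g' d by auto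
  moreover have "p 0 * (lam * g xs) \<le> 1 / real c * (lam * g xs)"
    using p_0 lam_nonneg g_xs by (intro mult_right_mono) auto
  moreover have "1 / real c * (lam * g xs) \<le> g xs / (xs * d)"
    using g_xs xs d by (cases "c = 0") (auto simp: lam)
  moreover have "g' * E / d \<le> g' * m / d"
    using mean g' d by (intro divide_right_mono mult_left_mono) (auto simp: E_def)
  moreover have "lam * h = real c * h / (xs * d)" by (simp add: lam)
  ultimately show ?thesis using reward_ge by linarith
qed

text \<open>
  \<open>q\<close> abstracts the balance weights of the two-price policy with prices \<open>xstar * (1 \<mp> u)\<close> and
  arrival rate \<open>c / (xstar d)\<close>: they grow geometrically up to the threshold \<open>tau\<close> and decay
  geometrically beyond it.
\<close>

locale two_price_chain =
  fixes c tau :: nat and u :: real and q :: "nat \<Rightarrow> real"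
  assumes q_0: "q 0 = 1"
    and q_Suc_low: "\<And>j. j < tau \<Longrightarrow> q (Suc j) = q j * (real c - real j) / (real c * (1 - u))"
    and q_Suc_high: "\<And>j. tau \<le> j \<Longrightarrow> j < c \<Longrightarrow> q (Suc j) = q j * (real c - real j) / (real c * (1 + u))"
    and u_pos: "0 < u" and u_le: "u \<le> 1/2"
    and tau_le: "real tau \<le> real c * u / 2"
    and tau_ge: "4 * ln (real c) \<le> real tau * u"
    and ln_c: "1 \<le> ln (real c)"
begin

lemma c_gt_1: "1 < real c"
proof -
  have "0 < real c" using ln_c by (cases c) auto
  then show ?thesis using ln_c ln_gt_zero_imp_gt_one[of "real c"] by linarith
qed

lemma tau_le_c: "tau \<le> c"
proof -
  have "real c * u / 2 \<le> real c" using c_gt_1 u_le by simp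
  then show ?thesis using tau_le by linarith
qed

lemma tau_u_ge: "4 \<le> real tau * u"
  using tau_ge ln_c by linarith

lemma q_nonneg: "j \<le> c \<Longrightarrow> 0 \<le> q j"
proof (induction j)
  case (Suc j)
  then show ?case
    using q_Suc_low[of j] q_Suc_high[of j] c_gt_1 u_pos u_le by (cases "j < tau") auto
qed (simp add: q_0)

lemma power_le_q: "k \<le> tau \<Longrightarrow> (1 + u/2) ^ k \<le> q k"
proof (induction k)
  case (Suc k)
  have "(1 + u/2) * (real c * (1 - u)) \<le> real c * (1 - u/2)"
    using c_gt_1 u_pos by (simp add: algebra_simps)
  also have "\<dots> \<le> real c - real k"
    using tau_le Suc.prems by (simp add: algebra_simps)
  finally have "1 + u/2 \<le> (real c - real k) / (real c * (1 - u))"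
    using c_gt_1 u_le by (simp add: field_simps)
  then have "(1 + u/2) ^ k * (1 + u/2) \<le> q k * ((real c - real k) / (real c * (1 - u)))"
    using Suc u_pos q_nonneg[of k] tau_le_c by (intro mult_mono) auto
  then show ?case using q_Suc_low[of k] Suc.prems by (simp add: mult.commute)
qed (simp add: q_0)

lemma c_le_q_tau: "real c \<le> q tau"
proof -
  have "u/2 - (u/2)^2 \<le> ln (1 + u/2)"
    using u_pos u_le by (intro ln_one_plus_pos_lower_bound) auto
  moreover have "u/4 \<le> u/2 - (u/2)^2"
    using u_pos u_le by (simp add: power2_eq_square field_simps)
  ultimately have "real tau * (u/4) \<le> real tau * ln (1 + u/2)"
    by (intro mult_left_mono) auto
  then have "ln (real c) \<le> real tau * ln (1 + u/2)"
    using tau_ge by simp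
  then have "real c \<le> (1 + u/2) ^ tau"
    using c_gt_1 u_pos by (subst (asm) ln_realpow[symmetric]) auto
  also have "\<dots> \<le> q tau" by (rule power_le_q) simp
  finally show ?thesis .
qed

lemma q_le_sum: "j \<le> c \<Longrightarrow> q j \<le> (\<Sum>i=0..c. q i)"
  using q_nonneg by (intro member_le_sum) auto

lemma q_tau_mult_power_le: "k \<le> tau \<Longrightarrow> q tau * (1 - u) ^ k \<le> q (tau - k)"
proof (induction k)
  case (Suc k)
  define j where "j = tau - Suc k"
  have j: "j < tau" "Suc j = tau - k" using Suc.prems by (auto simp: j_def)
  have "(real c - real j) / (real c * (1 - u)) \<le> 1 / (1 - u)"
    using c_gt_1 u_pos u_le mult_left_le_one_le[of "real j" u] by (simp add: field_simps)
  then have "q j * ((real c - real j) / (real c * (1 - u))) \<le> q j * (1 / (1 - u))"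
    using q_nonneg[of j] j tau_le_c by (intro mult_left_mono) auto
  then have "q (Suc j) \<le> q j / (1 - u)" using q_Suc_low[OF j(1)] by simp
  then have "q (Suc j) * (1 - u) \<le> q j" using u_le by (simp add: field_simps)
  moreover have "q tau * (1 - u) ^ k * (1 - u) \<le> q (Suc j) * (1 - u)"
    using Suc j u_le by (intro mult_right_mono) auto
  ultimately have "q tau * (1 - u) ^ k * (1 - u) \<le> q j" by linarith
  then show ?case unfolding j_def power_Suc2 by (simp add: mult.assoc)
qed simp

lemma q_tau_le_mult_sum: "q tau \<le> 2 * u * (\<Sum>j=0..c. q j)"
proof -
  have "(1 - u) ^ Suc tau \<le> exp (- u) ^ Suc tau"
    using u_le by (intro power_mono) (auto simp: exp_ge_add_one_self[of "-u", simplified])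
  also have "\<dots> = exp (- (real (Suc tau) * u))" by (simp add: algebra_simps flip: exp_of_nat_mult exp_add)
  also have "\<dots> \<le> exp (- 4)" using tau_u_ge u_pos by (simp add: algebra_simps)
  also have "\<dots> \<le> 1/2"
    using exp_ge_add_one_self[of 4] by (simp add: exp_minus field_simps)
  finally have geometric_tail: "(1 - u) ^ Suc tau \<le> 1/2" .
  have "1 / (2 * u) \<le> (1 - (1 - u) ^ Suc tau) / u"
    using geometric_tail u_pos by (simp add: field_simps)
  then have "q tau * (1 / (2 * u)) \<le> q tau * ((1 - (1 - u) ^ Suc tau) / u)"
    using c_le_q_tau c_gt_1 by (intro mult_left_mono) auto
  also have "(1 - (1 - u) ^ Suc tau) / u = (\<Sum>k<Suc tau. (1 - u) ^ k)"
    using u_pos by (subst sum_gp_strict) (simp del: power_Suc)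
  also have "q tau * \<dots> = (\<Sum>k=0..tau. q tau * (1 - u) ^ k)"
    by (simp add: atLeast0AtMost lessThan_Suc_atMost sum_distrib_left)
  also have "\<dots> \<le> (\<Sum>k=0..tau. q (tau - k))"
    using q_tau_mult_power_le by (intro sum_mono) auto
  also have "\<dots> = (\<Sum>j=0..tau. q j)"
    by (subst sum.atLeastAtMost_rev) simp
  also have "\<dots> \<le> (\<Sum>j=0..c. q j)"
    using tau_le_c q_nonneg by (intro sum_mono2) auto
  finally show ?thesis using u_pos by (simp add: field_simps)
qed

lemma q_le_q_tau_mult_power: "tau + k \<le> c \<Longrightarrow> q (tau + k) \<le> q tau * (1 / (1 + u)) ^ k"
proof (induction k)
  case (Suc k)
  have "(real c - real (tau + k)) / (real c * (1 + u)) \<le> real c / (real c * (1 + u))"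
    using c_gt_1 u_pos by (intro divide_right_mono) auto
  also have "\<dots> = 1 / (1 + u)" using c_gt_1 by simp
  finally have "(real c - real (tau + k)) / (real c * (1 + u)) \<le> 1 / (1 + u)" .
  then have "q (tau + k) * ((real c - real (tau + k)) / (real c * (1 + u))) \<le> q (tau + k) * (1 / (1 + u))"
    using q_nonneg Suc.prems by (intro mult_left_mono) auto
  also have "\<dots> \<le> q tau * (1 / (1 + u)) ^ k * (1 / (1 + u))"
    using Suc u_pos by (intro mult_right_mono) auto
  finally show ?case
    using q_Suc_high[of "tau + k"] Suc.prems by (simp add: mult.assoc)
qed simp

lemma excess_moment_le: "(\<Sum>j=0..c. real (j - tau) * q j) \<le> q tau * ((1 + u) / u)\<^sup>2"
proof -
  define r where "r = 1 / (1 + u)"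
  have r: "0 \<le> r" "r < 1" using u_pos by (auto simp: r_def)
  have "(\<Sum>j=0..c. real (j - tau) * q j) = (\<Sum>j=tau..c. real (j - tau) * q j)"
    by (intro sum.mono_neutral_right) auto
  also have "\<dots> = (\<Sum>k=0..c - tau. real k * q (tau + k))"
    using sum.shift_bounds_cl_nat_ivl[of "\<lambda>j. real (j - tau) * q j" 0 tau "c - tau"] tau_le_c
    by (simp add: add.commute)
  also have "\<dots> \<le> (\<Sum>k=0..c - tau. q tau * (real (Suc k) * r ^ k))"
  proof (rule sum_mono)
    fix k assume "k \<in> {0..c - tau}"
    then have "real k * q (tau + k) \<le> real k * (q tau * r ^ k)"
      using q_le_q_tau_mult_power[of k] tau_le_c by (intro mult_left_mono) (auto simp: r_def)
    also have "\<dots> \<le> real (Suc k) * (q tau * r ^ k)"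
      using c_le_q_tau c_gt_1 r by (intro mult_right_mono) auto
    finally show "real k * q (tau + k) \<le> q tau * (real (Suc k) * r ^ k)"
      by (simp only: mult.left_commute)
  qed
  also have "\<dots> = q tau * (\<Sum>k=0..c - tau. real (Suc k) * r ^ k)"
    by (simp add: sum_distrib_left)
  also have "\<dots> \<le> q tau * (1 / (1 - r)\<^sup>2)"
  proof -
    have "(\<lambda>k. real (Suc k) * r ^ k) sums (1 / (1 - r)\<^sup>2)"
      using geometric_deriv_sums[of r] r by simp
    then have "(\<Sum>k=0..c - tau. real (Suc k) * r ^ k) \<le> (\<Sum>k. real (Suc k) * r ^ k)"
      using r by (intro sum_le_suminf) (auto simp: sums_iff)
    also have "\<dots> = 1 / (1 - r)\<^sup>2" using sums_unique \<open>_ sums _\<close> by metis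
    finally show ?thesis using c_le_q_tau c_gt_1 by (intro mult_left_mono) auto
  qed
  also have "1 / (1 - r)\<^sup>2 = ((1 + u) / u)\<^sup>2"
    using u_pos by (simp add: r_def field_simps)
  finally show ?thesis .
qed

lemma first_moment_le: "(\<Sum>j=0..c. real j * q j) \<le> (real tau + 5 / u) * (\<Sum>j=0..c. q j)"
proof -
  define S where "S = (\<Sum>j=0..c. q j)"
  have "(\<Sum>j=0..c. real j * q j) \<le> (\<Sum>j=0..c. real tau * q j + real (j - tau) * q j)"
    using q_nonneg by (intro sum_mono) (auto simp flip: distrib_right intro!: mult_right_mono)
  also have "\<dots> = real tau * S + (\<Sum>j=0..c. real (j - tau) * q j)"
    by (simp add: sum.distrib sum_distrib_left S_def)
  also have "\<dots> \<le> real tau * S + 2 * u * S * ((1 + u) / u)\<^sup>2"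
    using excess_moment_le mult_right_mono[OF q_tau_le_mult_sum, of "((1 + u) / u)\<^sup>2"]
    by (simp add: S_def)
  also have "2 * u * S * ((1 + u) / u)\<^sup>2 = 2 * (1 + u)\<^sup>2 * S / u"
    using u_pos by (simp add: field_simps power2_eq_square)
  also have "\<dots> \<le> 5 * S / u"
  proof -
    have "(1 + u)\<^sup>2 \<le> (3/2)\<^sup>2" using u_pos u_le by (intro power_mono) auto
    then have "2 * (1 + u)\<^sup>2 \<le> 5" by (simp add: power2_eq_square)
    moreover have "0 \<le> S" unfolding S_def using q_nonneg by (intro sum_nonneg) auto
    ultimately show ?thesis using u_pos by (intro divide_right_mono mult_right_mono) auto
  qed
  finally show ?thesis by (simp add: S_def algebra_simps)
qed

end

lemma two_price_steady_state_le:
  fixes c tau :: nat and xs d u :: real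
  defines "lam \<equiv> real c / (xs * d)" and "x \<equiv> two_price_policy (xs * (1 - u)) (xs * (1 + u)) tau"
  assumes xs: "0 < xs" and d: "0 < d" and u: "0 < u" "u \<le> 1/2"
    and tau_le: "real tau \<le> real c * u / 2" and tau_ge: "4 * ln (real c) \<le> real tau * u"
    and ln_c: "1 \<le> ln (real c)"
  shows "steady_state c lam d x 0 \<le> 1 / real c"
    and "(\<Sum>i=0..c. real i * steady_state c lam d x i) \<le> real tau + 5 / u"
proof -
  define w where "w = balance_weight c lam d x"
  have c_pos: "0 < real c" using ln_c by (cases c) auto
  have lam_pos: "0 < lam" using c_pos xs d by (simp add: lam_def)
  have x_pos: "\<forall>j\<in>{1..c}. 0 < x j"
    using xs u by (auto simp: x_def two_price_policy_def)
  have "d * lam * (xs * (1 - u)) = real c * (1 - u)" "d * lam * (xs * (1 + u)) = real c * (1 + u)"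
    using xs d by (auto simp: lam_def)
  then interpret two_price_chain c tau u w
    using u tau_le tau_ge ln_c by unfold_locales (auto simp: w_def x_def two_price_policy_def)
  have p_eq: "steady_state c lam d x = (\<lambda>j. if j \<le> c then w j / (\<Sum>i=0..c. w i) else 0)"
    unfolding w_def by (rule steady_state_eq[OF lam_pos d x_pos])
  have sum_w: "real c \<le> (\<Sum>i=0..c. w i)"
    using c_le_q_tau q_le_sum[OF tau_le_c] by linarith
  then show "steady_state c lam d x 0 \<le> 1 / real c"
    using c_pos by (simp add: p_eq q_0 field_simps)
  have "(\<Sum>i=0..c. real i * steady_state c lam d x i) = (\<Sum>i=0..c. real i * w i) / (\<Sum>i=0..c. w i)"
    by (simp add: p_eq sum_divide_distrib)
  also have "\<dots> \<le> real tau + 5 / u"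
    using first_moment_le sum_w c_pos by (simp add: divide_le_eq)
  finally show "(\<Sum>i=0..c. real i * steady_state c lam d x i) \<le> real tau + 5 / u" .
qed

lemma threshold_bounds:
  fixes L u c :: real
  defines "tau \<equiv> nat \<lceil>4 * L / u\<rceil>"
  assumes L: "1 \<le> L" and u: "0 < u" "u \<le> 1/2" and c_u: "10 * L \<le> c * u\<^sup>2"
  shows "4 * L \<le> real tau * u" "real tau \<le> 5 * L / u" "real tau \<le> c * u / 2" "1 \<le> tau"
proof -
  have L_u: "2 \<le> L / u" using L u by (simp add: field_simps)
  have tau_ge: "4 * (L / u) \<le> real tau" and tau_le: "real tau \<le> 4 * (L / u) + 1"
    unfolding tau_def using L_u by linarith+
  then show "4 * L \<le> real tau * u" using u by (simp add: field_simps)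
  have "5 * L / u = 5 * (L / u)" by simp
  then show "real tau \<le> 5 * L / u" using tau_le L_u by linarith
  also have "5 * L / u \<le> c * u / 2" using c_u u by (simp add: field_simps power2_eq_square)
  finally show "real tau \<le> c * u / 2" .
  show "1 \<le> tau" using tau_ge L_u by linarith
qed

lemma two_price_loss_le:
  fixes g \<rho> :: "real \<Rightarrow> real" and c :: nat
  assumes xs: "0 < xs" and d: "0 < d" and g_xs: "0 \<le> g xs" and g': "0 \<le> g'"
    and lower: "\<forall>x\<in>{xs - eps..xs + eps}. g xs + g' * (x - xs) - \<rho> \<bar>x - xs\<bar> \<le> g x"
    and xs_eps: "xs + eps \<le> 1"
    and u: "0 < u" "u \<le> 1/2" "xs * u \<le> eps" and \<rho>: "0 \<le> \<rho> (xs * u)"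
    and ln_c: "1 \<le> ln (real c)" and c_u: "10 * ln (real c) \<le> real c * u\<^sup>2"
  shows "\<exists>xL\<in>{0..1}. \<exists>xH\<in>{0..1}. \<exists>tau\<in>{1..c}.
           perf_loss g c (real c / (xs * d)) d xs (two_price_policy xL xH tau)
             \<le> g xs / (xs * d) + real c * \<rho> (xs * u) / (xs * d) + g' * (10 * ln (real c) / u) / d"
proof -
  define L where "L = ln (real c)"
  define tau where "tau = nat \<lceil>4 * L / u\<rceil>"
  define lam where "lam = real c / (xs * d)"
  define xL where "xL = xs * (1 - u)"
  define xH where "xH = xs * (1 + u)"
  define x where "x = two_price_policy xL xH tau"
  note tau = threshold_bounds[of L u "real c", folded tau_def,
      OF ln_c[folded L_def] u(1,2) c_u[folded L_def]]
  note stationary = two_price_steady_state_le[OF xs d u(1,2) tau(3) tau(1)[unfolded L_def] ln_c,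
      folded lam_def xL_def xH_def x_def]
  have "5 / u \<le> 5 * L / u" using ln_c u by (simp add: L_def divide_right_mono)
  then have mean: "(\<Sum>i=0..c. real i * steady_state c lam d x i) \<le> 10 * L / u"
    using stationary(2) tau(2) by simp
  have xs_u: "0 < xs * u" using xs u by simp
  then have "\<bar>xL - xs\<bar> = xs * u" "\<bar>xH - xs\<bar> = xs * u"
    "xL \<in> {xs - eps..xs + eps}" "xH \<in> {xs - eps..xs + eps}"
    using u by (simp_all add: xL_def xH_def algebra_simps)
  then have lower_x: "\<forall>j\<in>{1..c}. g xs + g' * (x j - xs) - \<rho> (xs * u) \<le> g (x j)"
    using lower[rule_format, of xL] lower[rule_format, of xH] by (simp add: x_def two_price_policy_def)
  have "0 < real c" using ln_c by (cases c) auto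
  then have lam_pos: "0 < lam" and x_pos: "\<forall>j\<in>{1..c}. 0 < x j"
    using xs d u by (auto simp: lam_def x_def two_price_policy_def xL_def xH_def)
  have "perf_loss g c lam d xs x
      \<le> g xs / (xs * d) + real c * \<rho> (xs * u) / (xs * d) + g' * (10 * L / u) / d"
    using reward_gap_le[where g = g, OF is_steady_state_steady_state[OF lam_pos d x_pos] d xs lam_def
        lower_x g_xs \<rho> g' stationary(1) mean]
    by (simp add: perf_loss_def avg_reward_def)
  moreover have "0 \<le> xL" "xL \<le> xH" "xH \<le> 1"
    using xs xs_u u xs_eps by (simp_all add: xL_def xH_def algebra_simps)
  moreover have "real c * u / 2 \<le> real c" using u mult_left_mono[of u 2 "real c"] by simp
  then have "tau \<in> {1..c}" using tau(3,4) by simp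
  ultimately show ?thesis unfolding lam_def x_def L_def by force
qed

text \<open>\<open>real_asymp\<close> cannot handle the symbolic exponent \<open>b\<close>, hence the substitution
  \<open>y = x powr b\<close>.\<close>

lemma eventually_ln_squared_le_powr:
  fixes b e :: real assumes b: "0 < b" and e: "0 < e"
  shows "\<forall>\<^sub>F x in at_top. (ln x)\<^sup>2 \<le> e * x powr b"
proof -
  have "\<forall>\<^sub>F y in at_top. (ln y)\<^sup>2 \<le> (e * b\<^sup>2) * y"
    using b e by real_asymp
  then have "\<forall>\<^sub>F x in at_top. (ln (x powr b))\<^sup>2 \<le> (e * b\<^sup>2) * x powr b"
    by (rule eventually_compose_filterlim[OF _ real_powr_at_top[OF b]])
  moreover have "\<forall>\<^sub>F x in at_top. 0 < (x::real)" by (rule eventually_gt_at_top)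
  ultimately show ?thesis
  proof eventually_elim
    case (elim x)
    then have "b\<^sup>2 * (ln x)\<^sup>2 \<le> b\<^sup>2 * (e * x powr b)"
      by (simp add: algebra_simps)
    then show ?case using b by simp
  qed
qed

lemma power_step_size_bounds:
  fixes r c u0 :: real
  defines "C \<equiv> c powr (1 / (r + 1))"
  defines "u \<equiv> ln c powr (2 / r) / C"
  assumes r: "1 \<le> r" and c: "1 \<le> c" and ln_c: "1 \<le> ln c" and u0: "(ln c)\<^sup>2 \<le> u0 * C"
  shows "0 < u" "u \<le> u0" "c * u powr r = C * (ln c)\<^sup>2" "ln c / u \<le> C * (ln c)\<^sup>2"
proof -
  define L where "L = ln c"
  have L: "1 \<le> L" using ln_c by (simp add: L_def)
  have C: "1 \<le> C" unfolding C_def using c r by (intro ge_one_powr_ge_zero) auto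
  have L_powr_le: "L powr a \<le> L\<^sup>2" if "a \<le> 2" for a
    using L that powr_mono[of a 2 L] by simp
  show "0 < u" using L C by (simp add: u_def L_def)
  have "u \<le> L\<^sup>2 / C"
    unfolding u_def L_def[symmetric] using C L_powr_le[of "2 / r"] r
    by (intro divide_right_mono) (auto simp: field_simps)
  also have "\<dots> \<le> u0" using u0 C by (simp add: L_def divide_le_eq mult.commute)
  finally show "u \<le> u0" .
  have "c * u powr r = c / c powr (r / (r + 1)) * L powr 2"
    using L C r by (simp add: u_def L_def[symmetric] C_def powr_divide powr_powr)
  also have "c / c powr (r / (r + 1)) = C"
  proof -
    have "C * c powr (r / (r + 1)) = c"
      using c r by (simp add: C_def add.commute powr_add[symmetric] add_divide_distrib[symmetric])
    then show ?thesis using c by (simp add: divide_eq_eq)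
  qed
  finally show "c * u powr r = C * (ln c)\<^sup>2" using L by (simp add: L_def)
  have "ln c / u = C * L powr (1 - 2 / r)"
    using L C by (simp add: u_def L_def[symmetric] powr_diff)
  also have "\<dots> \<le> C * (ln c)\<^sup>2"
    using C r L_powr_le[of "1 - 2 / r"] by (simp add: L_def field_simps)
  finally show "ln c / u \<le> C * (ln c)\<^sup>2" .
qed

lemma power_step_size_square_bound:
  fixes r c :: real
  defines "u \<equiv> ln c powr (2 / r) / c powr (1 / (r + 1))"
  assumes r: "1 \<le> r" and c: "1 \<le> c" and ln_c: "10 \<le> ln c" and c_root: "10 * ln c \<le> c powr (1/3)"
  shows "10 * ln c \<le> c * u\<^sup>2"
proof -
  define L where "L = ln c"
  have L: "10 \<le> L" using ln_c by (simp add: L_def)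
  have "c powr ((r - 1) / (r + 1)) = c powr (1 - 2 / (r + 1))"
    using r by (simp add: field_simps)
  also have "\<dots> = c / c powr (2 / (r + 1))" using c by (simp add: powr_diff)
  finally have c_u: "c * u\<^sup>2 = c powr ((r - 1) / (r + 1)) * L powr (4 / r)"
    using c L r by (simp add: u_def L_def[symmetric] power_divide powr_powr powr_diff
        flip: powr_realpow)
  show ?thesis
  proof (cases "r \<le> 2")
    case True
    have "10 * L \<le> L\<^sup>2" using L by (simp add: power2_eq_square)
    also have "\<dots> \<le> L powr (4 / r)"
      using L True r powr_mono[of 2 "4 / r" L] by (simp add: field_simps)
    also have "\<dots> \<le> c powr ((r - 1) / (r + 1)) * L powr (4 / r)"
      using c r ge_one_powr_ge_zero[of c "(r - 1) / (r + 1)"] by (simp add: mult_le_cancel_right1)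
    finally show ?thesis using c_u by (simp add: L_def)
  next
    case False
    have "10 * L \<le> c powr (1/3)" using c_root by (simp add: L_def)
    also have "\<dots> \<le> c powr ((r - 1) / (r + 1))"
      using c False by (intro powr_mono) (auto simp: field_simps)
    also have "\<dots> \<le> c powr ((r - 1) / (r + 1)) * L powr (4 / r)"
      using L r ge_one_powr_ge_zero[of L "4 / r"] by (simp add: mult_le_cancel_left1)
    finally show ?thesis using c_u by (simp add: L_def)
  qed
qed

lemma eventually_constant_step_size:
  fixes u0 A G :: real
  assumes u0: "0 < u0" and A: "0 \<le> A" and G: "0 \<le> G"
  shows "\<forall>\<^sub>F c in at_top. 10 * ln c \<le> c * u0\<^sup>2 \<and>
           A + G * (ln c / u0) \<le> (A + G / u0 + 1) * (ln c)\<^sup>2"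
proof -
  have "\<forall>\<^sub>F c in at_top. 10 * ln c \<le> c * u0\<^sup>2 \<and> 1 \<le> ln c"
    using u0 by (intro eventually_conj) real_asymp+
  then show ?thesis
  proof eventually_elim
    case (elim c)
    then have ln_sq: "1 \<le> (ln c)\<^sup>2" "ln c \<le> (ln c)\<^sup>2" by (auto intro: self_le_power)
    moreover have "0 \<le> G / u0" using G u0 by simp
    ultimately have "A \<le> A * (ln c)\<^sup>2" "G / u0 * ln c \<le> G / u0 * (ln c)\<^sup>2"
      using A by (auto intro!: mult_left_mono simp del: times_divide_eq_left
          simp: mult_le_cancel_left1)
    then show ?case using elim ln_sq by (simp add: algebra_simps)
  qed
qed

lemma eventually_power_step_size:
  fixes r u0 A M G :: real
  assumes r: "1 \<le> r" and u0: "0 < u0" and A: "0 \<le> A" and M: "0 \<le> M" and G: "0 \<le> G"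
  shows "\<forall>\<^sub>F c in at_top. \<exists>u>0. u \<le> u0 \<and> 10 * ln c \<le> c * u\<^sup>2 \<and>
           A + M * (c * u powr r) + G * (ln c / u) \<le> (A + M + G + 1) * (c powr (1 / (r + 1)) * (ln c)\<^sup>2)"
proof -
  have "\<forall>\<^sub>F c in at_top. 1 \<le> c \<and> 10 \<le> ln c \<and> 10 * ln c \<le> c powr (1/3) \<and>
          (ln c)\<^sup>2 \<le> u0 * c powr (1 / (r + 1))"
    using r u0 by (intro eventually_conj eventually_ln_squared_le_powr) (real_asymp | simp)+
  then show ?thesis
  proof eventually_elim
    case (elim c)
    define R where "R = c powr (1 / (r + 1)) * (ln c)\<^sup>2"
    define u where "u = ln c powr (2 / r) / c powr (1 / (r + 1))"
    have bounds: "0 < u" "u \<le> u0" "10 * ln c \<le> c * u\<^sup>2" "c * u powr r = R" "ln c / u \<le> R"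
      using power_step_size_bounds[of r c u0] power_step_size_square_bound[of r c] elim r unfolding u_def R_def
      by auto
    have "1 \<le> c powr (1 / (r + 1))" using elim r by (intro ge_one_powr_ge_zero) auto
    moreover have "1 \<le> (ln c)\<^sup>2" using elim by (intro one_le_power) auto
    ultimately have "1 \<le> R" unfolding R_def using mult_mono[of 1 _ 1] by fastforce
    then have "A \<le> A * R" using A by (simp add: mult_le_cancel_left1)
    moreover have "M * (c * u powr r) = M * R" "G * (ln c / u) \<le> G * R"
      using bounds(4) mult_left_mono[OF bounds(5) G] by simp_all
    moreover have "(A + M + G + 1) * R = A * R + M * R + G * R + R" by (simp add: algebra_simps)
    ultimately have "A + M * (c * u powr r) + G * (ln c / u) \<le> (A + M + G + 1) * R"
      using \<open>1 \<le> R\<close> by linarith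
    then show ?case using bounds by (intro exI[of _ u]) (auto simp: R_def)
  qed
qed

lemma eventually_step_size:
  fixes alpha :: ereal and u0 A M G :: real
  assumes alpha: "1 \<le> alpha" and u0: "0 < u0" and A: "0 \<le> A" and M: "0 \<le> M" and G: "0 \<le> G"
  shows "\<exists>K>0. \<forall>\<^sub>F c in at_top. \<exists>u>0. u \<le> u0 \<and> 10 * ln c \<le> c * u\<^sup>2 \<and>
           A + (if alpha = \<infinity> then 0 else M * (c * u powr real_of_ereal alpha)) + G * (ln c / u)
             \<le> (if alpha = \<infinity> then K * (ln c)\<^sup>2
                 else K * c powr (1 / (real_of_ereal alpha + 1)) * (ln c)\<^sup>2)"
proof (cases alpha)
  case PInf
  have "0 < A + G / u0 + 1" using A G u0 by (simp add: add_nonneg_pos)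
  then show ?thesis using PInf u0 eventually_constant_step_size[OF u0 A G]
    by (intro exI[of _ "A + G / u0 + 1"]) (auto elim!: eventually_mono intro!: exI[of _ u0])
next
  case (real r)
  have "0 < A + M + G + 1" using A M G by simp
  then show ?thesis using real alpha eventually_power_step_size[OF _ u0 A M G, of r]
    by (intro exI[of _ "A + M + G + 1"]) (auto simp: mult.assoc)
qed (use alpha in simp)

lemma two_price_loss_le_power_remainder:
  fixes g :: "real \<Rightarrow> real" and alpha :: ereal and c :: nat
  defines "a \<equiv> real_of_ereal alpha"
  assumes xs: "0 < xs" and d: "0 < d" and g_xs: "0 \<le> g xs" and g': "0 \<le> g'" and k1: "0 \<le> k1"
    and lower: "\<forall>x\<in>{xs - eps..xs + eps}.
                  g xs + g' * (x - xs) - (if alpha = \<infinity> then 0 else k1 * \<bar>x - xs\<bar> powr a) \<le> g x"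
    and xs_eps: "xs + eps \<le> 1"
    and u: "0 < u" "u \<le> 1/2" "xs * u \<le> eps"
    and ln_c: "1 \<le> ln (real c)" and c_u: "10 * ln (real c) \<le> real c * u\<^sup>2"
  shows "\<exists>xL\<in>{0..1}. \<exists>xH\<in>{0..1}. \<exists>tau\<in>{1..c}.
           perf_loss g c (real c / (xs * d)) d xs (two_price_policy xL xH tau)
             \<le> g xs / (xs * d) + (if alpha = \<infinity> then 0 else k1 * xs powr a / (xs * d) * (real c * u powr a))
                + 10 * g' / d * (ln (real c) / u)"
proof -
  define \<rho> where "\<rho> t = (if alpha = \<infinity> then 0 else k1 * t powr a)" for t
  have "\<forall>x\<in>{xs - eps..xs + eps}. g xs + g' * (x - xs) - \<rho> \<bar>x - xs\<bar> \<le> g x"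
    unfolding \<rho>_def using lower .
  moreover have "0 \<le> \<rho> (xs * u)" using k1 by (simp add: \<rho>_def)
  ultimately have loss: "\<exists>xL\<in>{0..1}. \<exists>xH\<in>{0..1}. \<exists>tau\<in>{1..c}.
      perf_loss g c (real c / (xs * d)) d xs (two_price_policy xL xH tau)
        \<le> g xs / (xs * d) + real c * \<rho> (xs * u) / (xs * d) + g' * (10 * ln (real c) / u) / d"
    using two_price_loss_le[where g = g and \<rho> = \<rho>, OF xs d g_xs g' _ xs_eps u] ln_c c_u by blast
  have remainder: "real c * \<rho> (xs * u) / (xs * d)
      = (if alpha = \<infinity> then 0 else k1 * xs powr a / (xs * d) * (real c * u powr a))"
    using xs u by (simp add: \<rho>_def powr_mult)
  have drift: "g' * (10 * ln (real c) / u) / d = 10 * g' / d * (ln (real c) / u)"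
    by (simp add: field_simps)
  show ?thesis using loss[unfolded remainder drift] .
qed

lemma eventually_at_top_nat:
  assumes "\<forall>\<^sub>F x in at_top. P x"
  shows "\<exists>c0::nat. \<forall>c\<ge>c0. P (real c)"
  using eventually_compose_filterlim[OF assms filterlim_real_sequentially]
  unfolding eventually_sequentially .

lemma eventually_two_price_loss_le:
  fixes g B :: "real \<Rightarrow> real" and alpha :: ereal
  defines "a \<equiv> real_of_ereal alpha"
  assumes xs: "0 < xs" and d: "0 < d" and g_xs: "0 \<le> g xs" and g': "0 \<le> g'" and k1: "0 \<le> k1"
    and lower: "\<forall>x\<in>{xs - eps..xs + eps}.
                  g xs + g' * (x - xs) - (if alpha = \<infinity> then 0 else k1 * \<bar>x - xs\<bar> powr a) \<le> g x"
    and xs_eps: "xs + eps \<le> 1" and u0: "u0 \<le> 1/2" "xs * u0 \<le> eps"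
    and bound: "\<forall>\<^sub>F c in at_top. \<exists>u>0. u \<le> u0 \<and> 10 * ln c \<le> c * u\<^sup>2 \<and>
                  g xs / (xs * d) + (if alpha = \<infinity> then 0 else k1 * xs powr a / (xs * d) * (c * u powr a))
                    + 10 * g' / d * (ln c / u) \<le> B c"
  shows "\<exists>c0::nat. \<forall>c\<ge>c0. \<exists>xL\<in>{0..1}. \<exists>xH\<in>{0..1}. \<exists>tau\<in>{1..c}.
           perf_loss g c (real c / (xs * d)) d xs (two_price_policy xL xH tau) \<le> B (real c)"
proof -
  have "\<forall>\<^sub>F c in at_top. 1 \<le> ln (c :: real)" by real_asymp
  from eventually_at_top_nat[OF eventually_conj[OF this bound]] obtain c0 where c0:
    "\<forall>c\<ge>c0. 1 \<le> ln (real c) \<and> (\<exists>u>0. u \<le> u0 \<and> 10 * ln (real c) \<le> real c * u\<^sup>2 \<and>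
      g xs / (xs * d) + (if alpha = \<infinity> then 0 else k1 * xs powr a / (xs * d) * (real c * u powr a))
        + 10 * g' / d * (ln (real c) / u) \<le> B (real c))" by blast
  show ?thesis
  proof (intro exI allI impI)
    fix c assume "c0 \<le> c"
    with c0 obtain u where ln_c: "1 \<le> ln (real c)" and u: "0 < u" "u \<le> u0"
      and c_u: "10 * ln (real c) \<le> real c * u\<^sup>2"
      and le_B: "g xs / (xs * d) + (if alpha = \<infinity> then 0 else k1 * xs powr a / (xs * d) * (real c * u powr a))
                   + 10 * g' / d * (ln (real c) / u) \<le> B (real c)" by blast
    have "xs * u \<le> xs * u0" using u xs by simp
    then have "u \<le> 1/2" "xs * u \<le> eps" using u0 u by linarith+
    with two_price_loss_le_power_remainder[OF xs d g_xs g' k1 lower[unfolded a_def] xs_eps u(1) _ _ ln_c c_u]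
    show "\<exists>xL\<in>{0..1}. \<exists>xH\<in>{0..1}. \<exists>tau\<in>{1..c}.
        perf_loss g c (real c / (xs * d)) d xs (two_price_policy xL xH tau) \<le> B (real c)"
      using le_B unfolding a_def by (blast intro: order_trans)
  qed
qed

theorem theorem2:
  fixes g :: "real \<Rightarrow> real" and xstar d eps k1 g' :: real and alpha :: ereal
  assumes xstar: "0 < xstar" "xstar < 1"
    and d: "0 < d"
    and g_concave: "concave_on {0..1} g"
    and g_mono: "mono_on {0..1} g"
    and g0: "g 0 = 0"
    and eps: "0 < eps" "eps < min xstar (1 - xstar)"
    and alpha: "1 \<le> alpha"
    and k1: "0 \<le> k1"
    and supergrad: "\<forall>x\<in>{0..1}. g x \<le> g xstar + g' * (x - xstar)"
    and g'_pos: "0 < g'"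
    and assm1: "\<forall>x\<in>{xstar - eps..xstar + eps}.
         g x \<ge> g xstar + g' * (x - xstar)
                - (if alpha = \<infinity> then 0 else k1 * \<bar>x - xstar\<bar> powr real_of_ereal alpha)"
  shows "\<exists>K>0. \<exists>c0::nat. \<forall>c::nat. c \<ge> c0 \<longrightarrow>
           (\<exists>xL\<in>{0..1}. \<exists>xH\<in>{0..1}. \<exists>tau\<in>{1..c}.
              perf_loss g c (real c / (xstar * d)) d xstar (two_price_policy xL xH tau)
              \<le> (if alpha = \<infinity> then K * (ln (real c))\<^sup>2
                  else K * real c powr (1 / (real_of_ereal alpha + 1)) * (ln (real c))\<^sup>2))"
proof -
  define u0 where "u0 = min (eps / xstar) (1/2)"
  have u0: "0 < u0" "u0 \<le> 1/2" "xstar * u0 \<le> eps"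
    using eps xstar by (auto simp: u0_def min_def field_simps)
  have g_xstar: "0 \<le> g xstar" using mono_onD[OF g_mono, of 0 xstar] xstar g0 by simp
  have "0 \<le> g xstar / (xstar * d)" "0 \<le> k1 * xstar powr real_of_ereal alpha / (xstar * d)"
    "0 \<le> 10 * g' / d"
    using g_xstar xstar d k1 g'_pos by auto
  from eventually_step_size[OF alpha u0(1) this]
  obtain K where "0 < K" and bound: "\<forall>\<^sub>F c in at_top. \<exists>u>0. u \<le> u0 \<and> 10 * ln c \<le> c * u\<^sup>2 \<and>
      g xstar / (xstar * d)
        + (if alpha = \<infinity> then 0
           else k1 * xstar powr real_of_ereal alpha / (xstar * d) * (c * u powr real_of_ereal alpha))
        + 10 * g' / d * (ln c / u)
      \<le> (if alpha = \<infinity> then K * (ln c)\<^sup>2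
          else K * c powr (1 / (real_of_ereal alpha + 1)) * (ln c)\<^sup>2)"
    by blast
  have "xstar + eps \<le> 1" using eps by simp
  from eventually_two_price_loss_le[OF xstar(1) d g_xstar less_imp_le[OF g'_pos] k1 assm1 this u0(2,3) bound]
  show ?thesis using \<open>0 < K\<close> by blast
qed

end
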